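(* Let $G$ be a graph on $[n]$ whose connected components are $C_1,\dots,C_k$, and suppose that for all $i\neq j$ no edge of $C_i$ crosses an edge of $C_j$. Then $NC_G\cong NC_{C_1}\times NC_{C_2}\times\cdots\times NC_{C_k}$.
   Context: Graphs are finite simple graphs whose vertices are distinct positive integers; edges are written $ij$ with $i<j$. Two edges $a_1a_2$ and $b_1b_2$ cross if $a_1<b_1<a_2<b_2$ or $b_1<a_1<b_2<a_2$. A spanning subgraph is identified with its edge set. A bond of a graph $X$ is a spanning subgraph of $X$ each of whose connected components is an induced subgraph of $X$. A set partition of the vertex set is crossing if there are distinct blocks $B,B'$ and $a,c\in B$, $b,d\in B'$ with $a<b<c<d$, noncrossing otherwise; a bond is noncrossing if the partition of the vertex set into vertex sets of its connected components is noncrossing. $NC_X$ denotes the poset of noncrossing bonds of $X$ ordered by inclusion of edge sets. *)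

theory Defs
  imports Main "HOL-Library.FuncSet"
begin

text \<open>A graph is a pair (V, E): V a finite set of positive integers, E a set of
edges (i,j) with i < j.  Spanning subgraphs are identified with edge sets.\<close>

type_synonym graph = "nat set \<times> (nat \<times> nat) set"

definition crosses :: "nat \<times> nat \<Rightarrow> nat \<times> nat \<Rightarrow> bool" where
  "crosses e f \<longleftrightarrow>
     (fst e < fst f \<and> fst f < snd e \<and> snd e < snd f) \<or>
     (fst f < fst e \<and> fst e < snd f \<and> snd f < snd e)"

definition adj :: "(nat \<times> nat) set \<Rightarrow> nat \<Rightarrow> nat \<Rightarrow> bool" where
  "adj F x y \<longleftrightarrow> (x, y) \<in> F \<or> (y, x) \<in> F"

definition comp_sets :: "nat set \<Rightarrow> (nat \<times> nat) set \<Rightarrow> nat set set" where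
  "comp_sets V F = (\<lambda>x. {y \<in> V. (adj F)\<^sup>*\<^sup>* x y}) ` V"

definition induced :: "(nat \<times> nat) set \<Rightarrow> nat set \<Rightarrow> (nat \<times> nat) set" where
  "induced E S = {e \<in> E. fst e \<in> S \<and> snd e \<in> S}"

definition bond :: "graph \<Rightarrow> (nat \<times> nat) set \<Rightarrow> bool" where
  "bond X F \<longleftrightarrow> F \<subseteq> snd X \<and>
     (\<forall>S \<in> comp_sets (fst X) F. induced F S = induced (snd X) S)"

definition noncrossing_partition :: "nat set set \<Rightarrow> bool" where
  "noncrossing_partition P \<longleftrightarrow>
     \<not> (\<exists>B \<in> P. \<exists>B' \<in> P. B \<noteq> B' \<and>
          (\<exists>a b c d. a \<in> B \<and> c \<in> B \<and> b \<in> B' \<and> d \<in> B' \<and> a < b \<and> b < c \<and> c < d))"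

text \<open>The underlying set of the poset NC_X (ordered by inclusion).\<close>
definition NC :: "graph \<Rightarrow> (nat \<times> nat) set set" where
  "NC X = {F. bond X F \<and> noncrossing_partition (comp_sets (fst X) F)}"

definition components :: "graph \<Rightarrow> graph set" where
  "components X = (\<lambda>S. (S, induced (snd X) S)) ` comp_sets (fst X) (snd X)"

end

theory Submission
  imports Defs
begin

text \<open>Every edge of G lies inside a single component, so a spanning subgraph F is determined by
its restrictions to the components, and F is a bond of G iff each restriction is a bond of its
component, because the components of F refine those of G. The noncrossing condition splits the
same way: an edge of one component of G that jumps over a vertex of another component encloses
that whole component, since a walk inside it cannot leave without crossing the edge. Hence the
vertex sets of the components of G form a noncrossing partition, and a refinement of a noncrossing
partition is noncrossing iff it is noncrossing within each block.\<close>

definition component_of :: "nat set \<Rightarrow> (nat \<times> nat) set \<Rightarrow> nat \<Rightarrow> nat set" where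
  "component_of V F x = {y \<in> V. (adj F)\<^sup>*\<^sup>* x y}"

lemma comp_sets_eq_image: "comp_sets V F = component_of V F ` V"
  unfolding comp_sets_def component_of_def ..

lemma symp_adj: "symp (adj F)"
  unfolding adj_def by (auto intro: sympI)

lemma component_of_eq: "y \<in> component_of V F x \<Longrightarrow> component_of V F y = component_of V F x"
  using sympD[OF symp_rtranclp[OF symp_adj]]
  unfolding component_of_def by (auto intro: rtranclp_trans)

lemma component_of_self: "x \<in> V \<Longrightarrow> x \<in> component_of V F x"
  unfolding component_of_def by simp

lemma comp_sets_eq_component_of: "S \<in> comp_sets V F \<Longrightarrow> x \<in> S \<Longrightarrow> S = component_of V F x"
  unfolding comp_sets_eq_image using component_of_eq by blast

lemma comp_sets_disjoint:
  "S \<in> comp_sets V F \<Longrightarrow> S' \<in> comp_sets V F \<Longrightarrow> x \<in> S \<Longrightarrow> x \<in> S' \<Longrightarrow> S = S'"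
  using comp_sets_eq_component_of by metis

lemma comp_sets_subset: "S \<in> comp_sets V F \<Longrightarrow> S \<subseteq> V"
  unfolding comp_sets_def by blast

lemma comp_sets_closed:
  assumes "E \<subseteq> V \<times> V" "S \<in> comp_sets V E" "x \<in> S" "adj E x y"
  shows "y \<in> S"
  using assms comp_sets_eq_component_of[OF assms(2,3)]
  unfolding component_of_def adj_def by (auto intro: rtranclp.rtrancl_into_rtrancl)

lemma comp_sets_refines:
  assumes "F \<subseteq> E" "T \<in> comp_sets V F"
  shows "\<exists>S\<in>comp_sets V E. T \<subseteq> S"
proof -
  obtain x where "x \<in> V" "T = component_of V F x"
    using assms(2) unfolding comp_sets_eq_image by blast
  moreover have "adj F \<le> adj E"
    using assms(1) unfolding adj_def by auto
  ultimately have "T \<subseteq> component_of V E x"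
    unfolding component_of_def using rtranclp_mono by blast
  then show ?thesis
    using \<open>x \<in> V\<close> unfolding comp_sets_eq_image by blast
qed

lemma induced_eq: "induced F S = F \<inter> S \<times> S"
  unfolding induced_def by auto

lemma induced_induced: "T \<subseteq> S \<Longrightarrow> induced (induced F S) T = induced F T"
  unfolding induced_def by auto

lemma rtranclp_adj_induced:
  assumes closed: "\<And>u v. u \<in> S \<Longrightarrow> adj F u v \<Longrightarrow> v \<in> S"
    and "(adj F)\<^sup>*\<^sup>* x y" "x \<in> S"
  shows "(adj (induced F S))\<^sup>*\<^sup>* x y \<and> y \<in> S"
  using assms(2,3)
proof (induction rule: rtranclp_induct)
  case (step y z)
  then have "z \<in> S" using closed by blast
  with step have "adj (induced F S) y z"
    unfolding adj_def induced_def by auto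
  with step \<open>z \<in> S\<close> show ?case
    by (auto intro: rtranclp.rtrancl_into_rtrancl)
qed simp

lemma comp_sets_induced:
  assumes "E \<subseteq> V \<times> V" "F \<subseteq> E" "S \<in> comp_sets V E"
  shows "comp_sets S (induced F S) = {T \<in> comp_sets V F. T \<subseteq> S}"
proof -
  have closed: "\<And>u v. u \<in> S \<Longrightarrow> adj F u v \<Longrightarrow> v \<in> S"
    using comp_sets_closed[OF assms(1,3)] assms(2) unfolding adj_def by blast
  have "adj (induced F S) \<le> adj F"
    unfolding adj_def induced_def by auto
  then have "(adj (induced F S))\<^sup>*\<^sup>* \<le> (adj F)\<^sup>*\<^sup>*"
    by (rule rtranclp_mono)
  then have restrict: "component_of S (induced F S) x = component_of V F x" if "x \<in> S" for x
    using rtranclp_adj_induced[OF closed _ that] comp_sets_subset[OF assms(3)]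
    unfolding component_of_def by auto
  have "component_of V F ` S = {T \<in> comp_sets V F. T \<subseteq> S}"
  proof (intro equalityI subsetI)
    fix T assume "T \<in> component_of V F ` S"
    with restrict comp_sets_subset[OF assms(3)] show "T \<in> {T \<in> comp_sets V F. T \<subseteq> S}"
      unfolding comp_sets_eq_image by (force simp: component_of_def)
  next
    fix T assume "T \<in> {T \<in> comp_sets V F. T \<subseteq> S}"
    then obtain x where "x \<in> V" "T = component_of V F x" "T \<subseteq> S"
      unfolding comp_sets_eq_image by blast
    then show "T \<in> component_of V F ` S"
      using component_of_self by blast
  qed
  with restrict show ?thesis
    unfolding comp_sets_eq_image by simp
qed

lemma edges_within_comp_sets:
  assumes "E \<subseteq> V \<times> V"
  shows "E \<subseteq> (\<Union>S\<in>comp_sets V E. S \<times> S)"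
proof
  fix e assume "e \<in> E"
  moreover obtain x y where e: "e = (x, y)"
    by (cases e)
  ultimately have "x \<in> V" "adj E x y" "y \<in> V"
    using assms unfolding adj_def by auto
  then have "x \<in> component_of V E x" "y \<in> component_of V E x"
    unfolding component_of_def by auto
  with \<open>x \<in> V\<close> show "e \<in> (\<Union>S\<in>comp_sets V E. S \<times> S)"
    unfolding comp_sets_eq_image e by blast
qed

lemma bond_iff_bond_components:
  assumes "E \<subseteq> V \<times> V" "F \<subseteq> E"
  shows "bond (V, E) F \<longleftrightarrow> (\<forall>S\<in>comp_sets V E. bond (S, induced E S) (induced F S))"
proof -
  have per_component: "bond (S, induced E S) (induced F S) \<longleftrightarrow>
      (\<forall>T\<in>{T \<in> comp_sets V F. T \<subseteq> S}. induced F T = induced E T)"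
    if "S \<in> comp_sets V E" for S
  proof -
    have "induced F S \<subseteq> induced E S"
      using assms(2) unfolding induced_def by auto
    then show ?thesis
      unfolding bond_def fst_conv snd_conv comp_sets_induced[OF assms that]
      by (simp add: induced_induced)
  qed
  have "bond (V, E) F \<longleftrightarrow> (\<forall>T\<in>comp_sets V F. induced F T = induced E T)"
    using assms(2) unfolding bond_def by simp
  also have "\<dots> \<longleftrightarrow>
      (\<forall>S\<in>comp_sets V E. \<forall>T\<in>{T \<in> comp_sets V F. T \<subseteq> S}. induced F T = induced E T)"
    using comp_sets_refines[OF assms(2)] by blast
  also have "\<dots> \<longleftrightarrow> (\<forall>S\<in>comp_sets V E. bond (S, induced E S) (induced F S))"
    using per_component by simp
  finally show ?thesis .
qed

lemma noncrossing_partitionI: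
  assumes "\<And>B B' a b c d. B \<in> P \<Longrightarrow> B' \<in> P \<Longrightarrow> B \<noteq> B' \<Longrightarrow> a \<in> B \<Longrightarrow> c \<in> B \<Longrightarrow>
    b \<in> B' \<Longrightarrow> d \<in> B' \<Longrightarrow> a < b \<Longrightarrow> b < c \<Longrightarrow> c < d \<Longrightarrow> False"
  shows "noncrossing_partition P"
  using assms unfolding noncrossing_partition_def by metis

lemma noncrossing_partitionD:
  assumes "noncrossing_partition P" "B \<in> P" "B' \<in> P" "B \<noteq> B'" "a \<in> B" "c \<in> B"
    "b \<in> B'" "d \<in> B'" "a < b" "b < c" "c < d"
  shows False
  using assms unfolding noncrossing_partition_def by metis

lemma noncrossing_partition_iff_blocks:
  assumes Q: "noncrossing_partition Q" and refines: "\<forall>B\<in>P. \<exists>S\<in>Q. B \<subseteq> S"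
  shows "noncrossing_partition P \<longleftrightarrow> (\<forall>S\<in>Q. noncrossing_partition {B \<in> P. B \<subseteq> S})"
proof (intro iffI ballI)
  fix S assume P: "noncrossing_partition P"
  show "noncrossing_partition {B \<in> P. B \<subseteq> S}"
  proof (rule noncrossing_partitionI)
    fix B B' a b c d
    assume "B \<in> {B \<in> P. B \<subseteq> S}" "B' \<in> {B \<in> P. B \<subseteq> S}" "B \<noteq> B'" "a \<in> B" "c \<in> B"
      "b \<in> B'" "d \<in> B'" "a < b" "b < c" "c < d"
    then show False
      using noncrossing_partitionD[OF P] by blast
  qed
next
  assume blocks: "\<forall>S\<in>Q. noncrossing_partition {B \<in> P. B \<subseteq> S}"
  show "noncrossing_partition P"
  proof (rule noncrossing_partitionI)
    fix B B' a b c d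
    assume B: "B \<in> P" "B' \<in> P" "B \<noteq> B'" and abcd: "a \<in> B" "c \<in> B" "b \<in> B'" "d \<in> B'"
      and order: "a < b" "b < c" "c < d"
    obtain S S' where S: "S \<in> Q" "B \<subseteq> S" "S' \<in> Q" "B' \<subseteq> S'"
      using refines B by meson
    show False
    proof (cases "S = S'")
      case True
      with blocks S B have "noncrossing_partition {B \<in> P. B \<subseteq> S}" "B \<in> {B \<in> P. B \<subseteq> S}"
        "B' \<in> {B \<in> P. B \<subseteq> S}" by auto
      with B(3) abcd order show False
        using noncrossing_partitionD by blast
    next
      case False
      with S abcd order show False
        using noncrossing_partitionD[OF Q, of S S' a c b d] by blast
    qed
  qed
qed

lemma walk_jumps_over:
  assumes "(adj F)\<^sup>*\<^sup>* a c" "a < b" "b < c"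
    and F: "\<forall>e\<in>F. fst e < snd e \<and> fst e \<noteq> b \<and> snd e \<noteq> b"
  shows "\<exists>e\<in>F. fst e < b \<and> b < snd e"
  using assms(1,2)
proof (induction rule: converse_rtranclp_induct)
  case base
  with assms(3) show ?case by simp
next
  case (step y z)
  from \<open>adj F y z\<close> have edge: "(y, z) \<in> F \<or> (z, y) \<in> F"
    unfolding adj_def .
  show ?case
  proof (cases "z < b")
    case True
    with step.IH show ?thesis .
  next
    case False
    with edge F \<open>y < b\<close> have "(y, z) \<in> F" "b < z" by force+
    with \<open>y < b\<close> show ?thesis by force
  qed
qed

lemma walk_stays_between:
  assumes "(adj F)\<^sup>*\<^sup>* w z" "x < w" "w < y"
    and F: "\<forall>f\<in>F. fst f < snd f \<and> \<not> crosses (x, y) f \<and> x \<notin> {fst f, snd f} \<and> y \<notin> {fst f, snd f}"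
  shows "x < z \<and> z < y"
  using assms(1)
proof (induction rule: rtranclp_induct)
  case base
  with assms(2,3) show ?case by simp
next
  case (step z z')
  from \<open>adj F z z'\<close> have "(z, z') \<in> F \<or> (z', z) \<in> F"
    unfolding adj_def .
  with F step.IH show ?case
    unfolding crosses_def by fastforce
qed

lemma comp_sets_connected:
  assumes "E \<subseteq> V \<times> V" "S \<in> comp_sets V E" "x \<in> S" "y \<in> S"
  shows "(adj (induced E S))\<^sup>*\<^sup>* x y"
proof -
  have "(adj E)\<^sup>*\<^sup>* x y"
    using assms(4) comp_sets_eq_component_of[OF assms(2,3)] unfolding component_of_def by blast
  then show ?thesis
    using rtranclp_adj_induced comp_sets_closed[OF assms(1,2)] assms(3) by blast
qed

context
  fixes V :: "nat set" and E :: "(nat \<times> nat) set"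
  assumes within: "E \<subseteq> V \<times> V" and oriented: "\<forall>e\<in>E. fst e < snd e"
    and no_cross: "\<forall>S\<in>comp_sets V E. \<forall>S'\<in>comp_sets V E. S \<noteq> S' \<longrightarrow>
                     (\<forall>e\<in>induced E S. \<forall>f\<in>induced E S'. \<not> crosses e f)"
begin

lemma edge_encloses_component:
  assumes S: "S \<in> comp_sets V E" and S': "S' \<in> comp_sets V E" "S \<noteq> S'"
    and "a \<in> S" "c \<in> S" "b \<in> S'" "a < b" "b < c"
  shows "\<exists>e\<in>induced E S. \<forall>z\<in>S'. fst e < z \<and> z < snd e"
proof -
  have disjoint: "x \<notin> S'" if "x \<in> S" for x
    using comp_sets_disjoint[OF S S'(1) that] S'(2) by blast
  have "\<forall>e\<in>induced E S. fst e < snd e \<and> fst e \<noteq> b \<and> snd e \<noteq> b"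
    using oriented disjoint \<open>b \<in> S'\<close> unfolding induced_def by auto
  then obtain e where e: "e \<in> induced E S" "fst e < b" "b < snd e"
    using walk_jumps_over[OF comp_sets_connected[OF within S \<open>a \<in> S\<close> \<open>c \<in> S\<close>]]
      \<open>a < b\<close> \<open>b < c\<close> by blast
  have "fst f < snd f \<and> \<not> crosses (fst e, snd e) f \<and>
      fst e \<notin> {fst f, snd f} \<and> snd e \<notin> {fst f, snd f}" if f: "f \<in> induced E S'" for f
  proof -
    have "\<not> crosses e f"
      using no_cross S S' e(1) f by blast
    moreover have "fst e \<in> S" "snd e \<in> S" "fst f \<in> S'" "snd f \<in> S'" "fst f < snd f"
      using e(1) f oriented unfolding induced_def by auto
    ultimately show ?thesis
      using disjoint by auto
  qed
  then have "fst e < z \<and> z < snd e" if "z \<in> S'" for z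
    using walk_stays_between[OF comp_sets_connected[OF within S'(1) \<open>b \<in> S'\<close> that] e(2,3)]
    by blast
  with e(1) show ?thesis by blast
qed

lemma noncrossing_comp_sets: "noncrossing_partition (comp_sets V E)"
proof (rule noncrossing_partitionI)
  fix S S' a b c d
  assume S: "S \<in> comp_sets V E" "S' \<in> comp_sets V E" "S \<noteq> S'"
    and abcd: "a \<in> S" "c \<in> S" "b \<in> S'" "d \<in> S'" "a < b" "b < c" "c < d"
  obtain e where e: "e \<in> induced E S" "\<forall>z\<in>S'. fst e < z \<and> z < snd e"
    using edge_encloses_component[OF S] abcd by blast
  obtain f where f: "f \<in> induced E S'" "\<forall>z\<in>S. fst f < z \<and> z < snd f"
    using edge_encloses_component[OF S(2,1) S(3)[symmetric]] abcd by blast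
  have "fst e \<in> S" "fst f \<in> S'"
    using e(1) f(1) unfolding induced_def by auto
  with e(2) f(2) show False by fastforce
qed

end

lemma NC_iff_NC_comp_sets:
  assumes within: "E \<subseteq> V \<times> V" and nc: "noncrossing_partition (comp_sets V E)"
  shows "F \<in> NC (V, E) \<longleftrightarrow>
    F \<subseteq> (\<Union>S\<in>comp_sets V E. S \<times> S) \<and> (\<forall>S\<in>comp_sets V E. induced F S \<in> NC (S, induced E S))"
proof (cases "F \<subseteq> E")
  case True
  have NC_component: "induced F S \<in> NC (S, induced E S) \<longleftrightarrow>
      bond (S, induced E S) (induced F S) \<and> noncrossing_partition (comp_sets S (induced F S))" for S
    unfolding NC_def by simp
  have "F \<in> NC (V, E) \<longleftrightarrow>
      (\<forall>S\<in>comp_sets V E. bond (S, induced E S) (induced F S)) \<and>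
      noncrossing_partition (comp_sets V F)"
    unfolding NC_def using bond_iff_bond_components[OF within True] by simp
  moreover have "noncrossing_partition (comp_sets V F) \<longleftrightarrow>
      (\<forall>S\<in>comp_sets V E. noncrossing_partition (comp_sets S (induced F S)))"
    using noncrossing_partition_iff_blocks[OF nc] comp_sets_refines[OF True]
      comp_sets_induced[OF within True] by simp
  moreover have "F \<subseteq> (\<Union>S\<in>comp_sets V E. S \<times> S)"
    using True edges_within_comp_sets[OF within] by blast
  ultimately show ?thesis
    unfolding NC_component ball_conj_distrib by blast
next
  case False
  then obtain e where e: "e \<in> F" "e \<notin> E" by blast
  have "F \<notin> NC (V, E)"
    using e unfolding NC_def bond_def by auto
  moreover have "\<exists>S\<in>comp_sets V E. induced F S \<notin> NC (S, induced E S)"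
    if cover: "F \<subseteq> (\<Union>S\<in>comp_sets V E. S \<times> S)"
  proof -
    obtain S where "S \<in> comp_sets V E" "e \<in> induced F S"
      using cover e(1) unfolding induced_eq by blast
    with e(2) show ?thesis
      unfolding NC_def bond_def induced_eq by auto
  qed
  ultimately show ?thesis by blast
qed

lemma induced_UN_disjoint:
  assumes disjoint: "\<And>i j. i \<in> I \<Longrightarrow> j \<in> I \<Longrightarrow> i \<noteq> j \<Longrightarrow> S i \<inter> S j = {}"
    and G: "\<And>j. j \<in> I \<Longrightarrow> G j \<subseteq> S j \<times> S j" and i: "i \<in> I"
  shows "induced (\<Union>j\<in>I. G j) (S i) = G i"
proof -
  have "G j \<inter> S i \<times> S i = {}" if "j \<in> I" "j \<noteq> i" for j
    using G[OF that(1)] disjoint[OF that(1) i that(2)] by blast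
  with G[OF i] i show ?thesis
    unfolding induced_eq by blast
qed

lemma bij_betw_induced_family:
  assumes disjoint: "\<And>i j. i \<in> I \<Longrightarrow> j \<in> I \<Longrightarrow> i \<noteq> j \<Longrightarrow> S i \<inter> S j = {}"
    and A: "\<And>F. F \<in> A \<longleftrightarrow> F \<subseteq> (\<Union>i\<in>I. S i \<times> S i) \<and> (\<forall>i\<in>I. induced F (S i) \<in> B i)"
    and B: "\<And>i. i \<in> I \<Longrightarrow> B i \<subseteq> Pow (S i \<times> S i)"
  shows "bij_betw (\<lambda>F. \<lambda>i\<in>I. induced F (S i)) A (\<Pi>\<^sub>E i\<in>I. B i)"
proof (rule bij_betw_byWitness[where f' = "\<lambda>g. \<Union>i\<in>I. g i"])
  have g_sub: "g i \<subseteq> S i \<times> S i" if "g \<in> (\<Pi>\<^sub>E i\<in>I. B i)" "i \<in> I" for g i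
    using B[OF that(2)] PiE_mem[OF that] by blast
  have induced_Union: "induced (\<Union>j\<in>I. g j) (S i) = g i"
    if "g \<in> (\<Pi>\<^sub>E i\<in>I. B i)" "i \<in> I" for g i
    using disjoint g_sub[OF that(1)] that(2) by (rule induced_UN_disjoint)
  show "\<forall>F\<in>A. (\<Union>i\<in>I. (\<lambda>i\<in>I. induced F (S i)) i) = F"
  proof
    fix F assume "F \<in> A"
    then have "F \<subseteq> (\<Union>i\<in>I. S i \<times> S i)"
      using A[of F] by blast
    then show "(\<Union>i\<in>I. (\<lambda>i\<in>I. induced F (S i)) i) = F"
      unfolding induced_eq by auto
  qed
  show "\<forall>g\<in>\<Pi>\<^sub>E i\<in>I. B i. (\<lambda>i\<in>I. induced (\<Union>j\<in>I. g j) (S i)) = g"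
  proof
    fix g assume g: "g \<in> (\<Pi>\<^sub>E i\<in>I. B i)"
    show "(\<lambda>i\<in>I. induced (\<Union>j\<in>I. g j) (S i)) = g"
    proof
      fix i
      show "(\<lambda>i\<in>I. induced (\<Union>j\<in>I. g j) (S i)) i = g i"
        using induced_Union[OF g] PiE_arb[OF g] by (cases "i \<in> I") auto
    qed
  qed
  show "(\<lambda>F. \<lambda>i\<in>I. induced F (S i)) ` A \<subseteq> (\<Pi>\<^sub>E i\<in>I. B i)"
  proof
    fix g assume "g \<in> (\<lambda>F. \<lambda>i\<in>I. induced F (S i)) ` A"
    then obtain F where "F \<in> A" "g = (\<lambda>i\<in>I. induced F (S i))"
      by blast
    with A[of F] show "g \<in> (\<Pi>\<^sub>E i\<in>I. B i)"
      by (simp add: restrict_PiE_iff)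
  qed
  show "(\<lambda>g. \<Union>i\<in>I. g i) ` (\<Pi>\<^sub>E i\<in>I. B i) \<subseteq> A"
  proof
    fix F assume "F \<in> (\<lambda>g. \<Union>i\<in>I. g i) ` (\<Pi>\<^sub>E i\<in>I. B i)"
    then obtain g where g: "g \<in> (\<Pi>\<^sub>E i\<in>I. B i)" and F: "F = (\<Union>i\<in>I. g i)"
      by blast
    have "F \<subseteq> (\<Union>i\<in>I. S i \<times> S i)"
      unfolding F using g_sub[OF g] by blast
    moreover have "\<forall>i\<in>I. induced F (S i) \<in> B i"
      unfolding F using induced_Union[OF g] PiE_mem[OF g] by simp
    ultimately show "F \<in> A"
      using A[of F] by blast
  qed
qed

lemma subset_iff_induced_subset:
  assumes "F \<subseteq> (\<Union>i\<in>I. S i \<times> S i)"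
  shows "F \<subseteq> F' \<longleftrightarrow> (\<forall>i\<in>I. induced F (S i) \<subseteq> induced F' (S i))"
  using assms unfolding induced_eq by blast

theorem lemma2p9:
  fixes n :: nat and E :: "(nat \<times> nat) set"
  assumes edges: "\<forall>e \<in> E. fst e < snd e \<and> fst e \<in> {1..n} \<and> snd e \<in> {1..n}"
    and no_cross: "\<forall>C \<in> components ({1..n}, E). \<forall>D \<in> components ({1..n}, E).
                     C \<noteq> D \<longrightarrow> (\<forall>e \<in> snd C. \<forall>f \<in> snd D. \<not> crosses e f)"
  shows "\<exists>\<phi>. bij_betw \<phi> (NC ({1..n}, E)) (\<Pi>\<^sub>E C \<in> components ({1..n}, E). NC C) \<and>
             (\<forall>F \<in> NC ({1..n}, E). \<forall>F' \<in> NC ({1..n}, E).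
                F \<subseteq> F' \<longleftrightarrow> (\<forall>C \<in> components ({1..n}, E). \<phi> F C \<subseteq> \<phi> F' C))"
proof -
  let ?V = "{1..n}" and ?C = "components ({1..n}, E)"
  have within: "E \<subseteq> ?V \<times> ?V" and oriented: "\<forall>e\<in>E. fst e < snd e"
    using edges by auto
  have components: "?C = (\<lambda>S. (S, induced E S)) ` comp_sets ?V E"
    unfolding components_def by simp
  have "noncrossing_partition (comp_sets ?V E)"
    using noncrossing_comp_sets[OF within oriented] no_cross unfolding components by auto
  then have NC_iff: "F \<in> NC (?V, E) \<longleftrightarrow>
      F \<subseteq> (\<Union>C\<in>?C. fst C \<times> fst C) \<and> (\<forall>C\<in>?C. induced F (fst C) \<in> NC C)" for F
    using NC_iff_NC_comp_sets[OF within] unfolding components by simp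
  have disjoint: "fst C \<inter> fst D = {}" if C: "C \<in> ?C" and D: "D \<in> ?C" and "C \<noteq> D" for C D
  proof -
    obtain S S' where "S \<in> comp_sets ?V E" "S' \<in> comp_sets ?V E"
      and "C = (S, induced E S)" "D = (S', induced E S')"
      using C D unfolding components by blast
    with \<open>C \<noteq> D\<close> comp_sets_disjoint show ?thesis by fastforce
  qed
  have "NC C \<subseteq> Pow (fst C \<times> fst C)" if "C \<in> ?C" for C
    using that unfolding components NC_def bond_def induced_eq by auto
  with disjoint NC_iff have "bij_betw (\<lambda>F. \<lambda>C\<in>?C. induced F (fst C)) (NC (?V, E)) (\<Pi>\<^sub>E C\<in>?C. NC C)"
    by (rule bij_betw_induced_family)
  moreover have "F \<subseteq> F' \<longleftrightarrow> (\<forall>C\<in>?C. induced F (fst C) \<subseteq> induced F' (fst C))"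
    if "F \<in> NC (?V, E)" for F F'
    using NC_iff that by (intro subset_iff_induced_subset) blast
  ultimately show ?thesis
    by (intro exI[of _ "\<lambda>F. \<lambda>C\<in>?C. induced F (fst C)"]) auto
qed

end
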